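(* Let $\mathbb{M}$ be a flow monoid with idempotent addition, and consider flow graphs whose edge functions are continuous, distributive and decreasing. Then: (a) for every such flow graph $h=(X,E,\mathit{in}_0)$, every inflow $\mathit{in}$, $y\in X$ and $z\in\mathbb{N}\setminus X$, $\mathsf{tf}(h)(\mathit{in})(y,z)=\sum_{x\in X}\sum_{p\in\mathrm{SPaths}_h(x\to(y,z))}E_p(\mathit{in}_x)$; (b) for such flow graphs $h_1,h_2$ with the same node set $X$, $\mathsf{tf}(h_1)=\mathsf{tf}(h_2)$ if and only if simple path replacement of $h_1$ by $h_2$ and of $h_2$ by $h_1$ both hold.
   Context: A flow monoid is a commutative monoid $(\mathbb{M},+,0)$ such that $n\le m :\iff \exists o.\ m=n+o$ is a partial order in which every ascending chain $K$ has a least upper bound $\bigsqcup K$, and $n+\bigsqcup K=\bigsqcup(n+K)$. Addition is idempotent if $m+m=m$. A function $f$ is continuous if it commutes with least upper bounds of ascending chains, distributive if $f(m+n)=f(m)+f(n)$ and $f(0)=0$, decreasing if $f(m)\le m$. Sums and $\le$ on functions are pointwise; empty sums are $0$. A flow graph is $h=(X,E,\mathit{in})$ with $X\subseteq\mathbb{N}$ finite, $E:X\times\mathbb{N}\to$ continuous functions $\mathbb{M}\to\mathbb{M}$, $\mathit{in}:(\mathbb{N}\setminus X)\times X\to\mathbb{M}$; $\mathit{in}_x=\sum_{y\notin X}\mathit{in}(y,x)$ (infinite sums as least upper bounds of finite partial sums); the flow is the least $\mathit{flow}:X\to\mathbb{M}$ with $\mathit{flow}(x)=\mathit{in}_x+\sum_{y\in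 X}E(y,x)(\mathit{flow}(y))$; outflow $\mathit{out}(x,y)=E(x,y)(\mathit{flow}(x))$. The transfer function $\mathsf{tf}(h)$ maps each inflow $\mathit{in}'$ to the outflow of $(X,E,\mathit{in}')$. A path through $h$ is $p=x_0\cdots x_nz$ with $x_i\in X$, $z\in\mathbb{N}\setminus X$; it is simple if $x_0,\dots,x_n$ are pairwise distinct. $\mathrm{SPaths}_h(x\to(y,z))$ is the set of simple paths with $x_0=x$, $x_n=y$, final element $z$. $E_p=E(x_n,z)\circ\cdots\circ E(x_0,x_1)$; $E_P=\sum_{q\in P}E_q$. $\mathrm{Out}(h_1,h_2)=\{x\in X\mid\exists z.\ h_1.E(x,z)\neq h_2.E(x,z)\}$. Simple path replacement of $h_1$ by $h_2$: for every $x\in\mathrm{Out}(h_1,h_2)$, $y\in X$, $z\in\mathbb{N}\setminus X$ and every $p\in\mathrm{SPaths}_{h_1}(x\to(y,z))$ there is $P\subseteq\mathrm{SPaths}_{h_2}(x\to(y,z))$ with $E_p\le E_P$. *)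

theory Defs
  imports Main
begin

definition mle :: "'m::comm_monoid_add \<Rightarrow> 'm \<Rightarrow> bool" where
  "mle n m \<longleftrightarrow> (\<exists>k. m = n + k)"

definition is_chain_m :: "'m::comm_monoid_add set \<Rightarrow> bool" where
  "is_chain_m K \<longleftrightarrow> K \<noteq> {} \<and> (\<forall>a\<in>K. \<forall>b\<in>K. mle a b \<or> mle b a)"

definition is_lub_m :: "'m::comm_monoid_add set \<Rightarrow> 'm \<Rightarrow> bool" where
  "is_lub_m K l \<longleftrightarrow> (\<forall>k\<in>K. mle k l) \<and> (\<forall>u. (\<forall>k\<in>K. mle k u) \<longrightarrow> mle l u)"

definition Lub_m :: "'m::comm_monoid_add set \<Rightarrow> 'm" where
  "Lub_m K = (THE l. is_lub_m K l)"

definition flow_monoid :: "'m::comm_monoid_add itself \<Rightarrow> bool" where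
  "flow_monoid _ \<longleftrightarrow>
     (\<forall>a b::'m. mle a b \<and> mle b a \<longrightarrow> a = b) \<and>
     (\<forall>K::'m set. is_chain_m K \<longrightarrow> (\<exists>l. is_lub_m K l)) \<and>
     (\<forall>(n::'m) K. is_chain_m K \<longrightarrow> n + Lub_m K = Lub_m ((\<lambda>k. n + k) ` K))"

definition idempotent_add :: "'m::comm_monoid_add itself \<Rightarrow> bool" where
  "idempotent_add _ \<longleftrightarrow> (\<forall>m::'m. m + m = m)"

definition continuous_m :: "('m::comm_monoid_add \<Rightarrow> 'm) \<Rightarrow> bool" where
  "continuous_m f \<longleftrightarrow> (\<forall>K. is_chain_m K \<longrightarrow> f (Lub_m K) = Lub_m (f ` K))"

definition distributive_m :: "('m::comm_monoid_add \<Rightarrow> 'm) \<Rightarrow> bool" where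
  "distributive_m f \<longleftrightarrow> (\<forall>m n. f (m + n) = f m + f n) \<and> f 0 = 0"

definition decreasing_m :: "('m::comm_monoid_add \<Rightarrow> 'm) \<Rightarrow> bool" where
  "decreasing_m f \<longleftrightarrow> (\<forall>m. mle (f m) m)"

text \<open>A flow graph is given by a finite node set X, edge functions E (only
  E x z for x in X matter) and an inflow ifl (only ifl y x for y not in X,
  x in X matter).\<close>

type_synonym 'm edges = "nat \<Rightarrow> nat \<Rightarrow> 'm \<Rightarrow> 'm"
type_synonym 'm inflow = "nat \<Rightarrow> nat \<Rightarrow> 'm"

definition infsum_m :: "(nat \<Rightarrow> 'm::comm_monoid_add) \<Rightarrow> nat set \<Rightarrow> 'm" where
  "infsum_m f A = Lub_m {sum f F | F. finite F \<and> F \<subseteq> A}"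

definition inflow_at :: "nat set \<Rightarrow> 'm::comm_monoid_add inflow \<Rightarrow> nat \<Rightarrow> 'm" where
  "inflow_at X ifl x = infsum_m (\<lambda>y. ifl y x) (- X)"

definition is_flow_sol :: "nat set \<Rightarrow> 'm::comm_monoid_add edges \<Rightarrow> 'm inflow \<Rightarrow> (nat \<Rightarrow> 'm) \<Rightarrow> bool" where
  "is_flow_sol X E ifl fl \<longleftrightarrow>
     (\<forall>x\<in>X. fl x = inflow_at X ifl x + (\<Sum>y\<in>X. E y x (fl y)))"

definition flow :: "nat set \<Rightarrow> 'm::comm_monoid_add edges \<Rightarrow> 'm inflow \<Rightarrow> nat \<Rightarrow> 'm" where
  "flow X E ifl = (THE fl. is_flow_sol X E ifl fl
      \<and> (\<forall>g. is_flow_sol X E ifl g \<longrightarrow> (\<forall>x\<in>X. mle (fl x) (g x)))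
      \<and> (\<forall>x. x \<notin> X \<longrightarrow> fl x = 0))"

definition tf :: "nat set \<Rightarrow> 'm::comm_monoid_add edges \<Rightarrow> 'm inflow \<Rightarrow> nat \<Rightarrow> nat \<Rightarrow> 'm" where
  "tf X E ifl = (\<lambda>x z. if x \<in> X \<and> z \<notin> X then E x z (flow X E ifl x) else 0)"

text \<open>A path x0 ... xn z is represented by the list [x0,...,xn,z].\<close>
fun path_fun :: "'m edges \<Rightarrow> nat list \<Rightarrow> 'm \<Rightarrow> 'm" where
  "path_fun E (a # b # rest) = path_fun E (b # rest) \<circ> E a b"
| "path_fun E _ = id"

definition SPaths :: "nat set \<Rightarrow> nat \<Rightarrow> nat \<Rightarrow> nat \<Rightarrow> nat list set" where
  "SPaths X x y z = {xs @ [z] | xs. xs \<noteq> [] \<and> set xs \<subseteq> X \<and> distinct xs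
                       \<and> hd xs = x \<and> last xs = y \<and> z \<notin> X}"

definition Out :: "nat set \<Rightarrow> 'm edges \<Rightarrow> 'm edges \<Rightarrow> nat set" where
  "Out X E1 E2 = {x \<in> X. \<exists>z. E1 x z \<noteq> E2 x z}"

definition spath_repl :: "nat set \<Rightarrow> 'm::comm_monoid_add edges \<Rightarrow> 'm edges \<Rightarrow> bool" where
  "spath_repl X E1 E2 \<longleftrightarrow>
     (\<forall>x\<in>Out X E1 E2. \<forall>y\<in>X. \<forall>z. z \<notin> X \<longrightarrow>
        (\<forall>p\<in>SPaths X x y z. \<exists>P. P \<subseteq> SPaths X x y z \<and>
            (\<forall>m. mle (path_fun E1 p m) (\<Sum>q\<in>P. path_fun E2 q m))))"

definition good_edges :: "nat set \<Rightarrow> 'm::comm_monoid_add edges \<Rightarrow> bool" where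
  "good_edges X E \<longleftrightarrow> (\<forall>x\<in>X. \<forall>z. continuous_m (E x z) \<and> distributive_m (E x z)
                                    \<and> decreasing_m (E x z))"

end

theory Submission
  imports Defs
begin

text \<open>With idempotent addition the order is a partial order with \<open>+\<close> as join. Let \<open>S y\<close> be
  the sum, over all simple walks \<open>x \<dots> y\<close> inside \<open>X\<close>, of the walk's edge functions applied to
  the inflow at \<open>x\<close>. Since edge functions are decreasing, a walk that repeats a node is
  dominated by the walk with the cycle cut out, so every walk into \<open>y\<close> lies below \<open>S y\<close>; this
  makes \<open>S\<close> a solution of the flow equation, and induction along walks shows that it lies below
  every solution. Hence \<open>S\<close> is the flow, and (a) follows by distributivity of the last edge.

  For (b), if \<open>h\<^sub>2\<close> replaces \<open>h\<^sub>1\<close>, split a simple path of \<open>h\<^sub>1\<close> at its first node whose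
  edges changed: the prefix is shared, the suffix is replaced by simple paths of \<open>h\<^sub>2\<close>, and the
  resulting walks shortcut to simple paths of \<open>h\<^sub>2\<close>; so \<open>tf h\<^sub>1 \<le> tf h\<^sub>2\<close>. Conversely, an
  inflow that injects \<open>m\<close> at the single node \<open>x\<close> turns \<open>tf h (in) (y, z)\<close> into the sum of
  \<open>E\<^sub>p m\<close> over the simple paths from \<open>x\<close>, so equal transfer functions give replacement with
  \<open>P\<close> the set of all simple paths.\<close>

section \<open>The natural order\<close>

lemma mle_refl: "mle a a"
  unfolding mle_def by (metis add.right_neutral)

lemma mle_trans [trans]: "mle a b \<Longrightarrow> mle b c \<Longrightarrow> mle a c"
  unfolding mle_def by (metis add.assoc)

lemma mle_zero: "mle 0 a"
  by (simp add: mle_def)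

lemma mle_add1: "mle a (a + b)"
  by (auto simp: mle_def)

lemma mle_add2: "mle b (a + b)"
  by (metis add.commute mle_add1)

lemma member_mle_sum: "finite A \<Longrightarrow> i \<in> A \<Longrightarrow> mle (f i) (sum f A)"
  by (metis mle_add1 sum.remove)

lemma distributive_m_mono: "distributive_m f \<Longrightarrow> mle a b \<Longrightarrow> mle (f a) (f b)"
  unfolding distributive_m_def mle_def by metis

lemma distributive_m_sum: "distributive_m f \<Longrightarrow> f (sum g A) = (\<Sum>i\<in>A. f (g i))"
  unfolding distributive_m_def
  by (induction A rule: infinite_finite_induct) auto

locale idempotent_monoid =
  fixes T :: "'m::comm_monoid_add itself"
  assumes idempotent_add: "idempotent_add T"
begin

lemma mle_iff_add_eq: "mle a b \<longleftrightarrow> a + b = (b::'m)"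
proof
  assume "mle a b"
  then obtain k where "b = a + k"
    unfolding mle_def by blast
  then show "a + b = b"
    using idempotent_add by (simp add: idempotent_add_def add.assoc[symmetric])
qed (metis mle_def)

lemma mle_antisym: "mle a b \<Longrightarrow> mle b a \<Longrightarrow> a = (b::'m)"
  unfolding mle_iff_add_eq by (metis add.commute)

lemma mle_add_least: "mle a c \<Longrightarrow> mle b c \<Longrightarrow> mle (a + b) (c::'m)"
  unfolding mle_iff_add_eq by (metis add.assoc)

lemma sum_mle_least: "(\<And>i. i \<in> A \<Longrightarrow> mle (f i) (c::'m)) \<Longrightarrow> mle (sum f A) c"
  by (induction A rule: infinite_finite_induct) (auto simp: mle_zero mle_add_least)

end

section \<open>Walks and path functions\<close>

lemma path_fun_append:
  "path_fun E (xs @ a # ys) = path_fun E (a # ys) \<circ> path_fun E (xs @ [a])"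
proof (induction xs)
  case Nil then show ?case by simp
next
  case (Cons b xs) then show ?case by (cases xs) (auto simp: comp_assoc)
qed

lemma path_fun_snoc:
  assumes "xs \<noteq> []"
  shows "path_fun E (xs @ [z]) = E (last xs) z \<circ> path_fun E xs"
proof -
  have xs: "xs = butlast xs @ [last xs]"
    using assms by simp
  then have "path_fun E (xs @ [z]) = path_fun E (butlast xs @ last xs # [z])"
    by (metis append.assoc append_Cons append_Nil)
  also have "\<dots> = path_fun E [last xs, z] \<circ> path_fun E (butlast xs @ [last xs])"
    by (rule path_fun_append)
  also have "\<dots> = E (last xs) z \<circ> path_fun E xs"
    using xs by simp
  finally show ?thesis .
qed

lemma path_fun_cong:
  "\<forall>a\<in>set (butlast p). \<forall>b. E1 a b = E2 a b \<Longrightarrow> path_fun E1 p = path_fun E2 p"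
proof (induction p)
  case (Cons a p) then show ?case by (cases p) auto
qed simp

definition simple_walks :: "nat set \<Rightarrow> nat \<Rightarrow> nat \<Rightarrow> nat list set" where
  "simple_walks X x y = {xs. xs \<noteq> [] \<and> set xs \<subseteq> X \<and> distinct xs \<and> hd xs = x \<and> last xs = y}"

lemma finite_simple_walks: "finite X \<Longrightarrow> finite (simple_walks X x y)"
  by (rule finite_subset[OF _ finite_subset_distinct]) (auto simp: simple_walks_def)

lemma SPaths_eq_image: "z \<notin> X \<Longrightarrow> SPaths X x y z = (\<lambda>xs. xs @ [z]) ` simple_walks X x y"
  by (auto simp: SPaths_def simple_walks_def)

lemma finite_SPaths:
  assumes "finite X" shows "finite (SPaths X x y z)"
proof (cases "z \<in> X")
  case False
  then show ?thesis using SPaths_eq_image finite_simple_walks[OF assms] by simp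
qed (simp add: SPaths_def)

lemma SPaths_memE:
  assumes "p \<in> SPaths X x y z"
  obtains xs where "p = xs @ [z]" "xs \<in> simple_walks X x y" "z \<notin> X"
  using assms unfolding SPaths_def simple_walks_def by blast

lemma path_fun_distributive:
  "good_edges X E \<Longrightarrow> set (butlast p) \<subseteq> X \<Longrightarrow> distributive_m (path_fun E p)"
  by (induction E p rule: path_fun.induct) (auto simp: good_edges_def distributive_m_def)

lemma path_fun_decreasing:
  "good_edges X E \<Longrightarrow> set (butlast p) \<subseteq> X \<Longrightarrow> decreasing_m (path_fun E p)"
proof (induction E p rule: path_fun.induct)
  case (1 E a b rest)
  have "mle (path_fun E (a # b # rest) m) m" for m
  proof -
    have "mle (path_fun E (b # rest) (E a b m)) (E a b m)"
      using 1 by (auto simp: decreasing_m_def)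
    also have "mle (E a b m) m"
      using 1 by (auto simp: good_edges_def decreasing_m_def)
    finally show ?thesis by simp
  qed
  then show ?case by (simp add: decreasing_m_def)
next
  case ("2_1" E)
  show ?case by (simp add: decreasing_m_def mle_refl)
next
  case ("2_2" E v)
  show ?case by (simp add: decreasing_m_def mle_refl)
qed

lemma path_fun_mono:
  "good_edges X E \<Longrightarrow> set (butlast p) \<subseteq> X \<Longrightarrow> mle a b \<Longrightarrow> mle (path_fun E p a) (path_fun E p b)"
  using path_fun_distributive distributive_m_mono by blast

lemma path_fun_zero: "good_edges X E \<Longrightarrow> set (butlast p) \<subseteq> X \<Longrightarrow> path_fun E p 0 = 0"
  using path_fun_distributive by (auto simp: distributive_m_def)

section \<open>Shortcutting cycles\<close>

lemma path_fun_remove_cycle: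
  assumes good: "good_edges X E" and walk: "set (as @ a # bs @ a # cs) \<subseteq> X"
  shows "mle (path_fun E (as @ a # bs @ a # cs) m) (path_fun E (as @ a # cs) m)"
proof -
  have split: "path_fun E (as @ a # bs @ a # cs)
      = path_fun E (a # cs) \<circ> path_fun E (a # bs @ [a]) \<circ> path_fun E (as @ [a])"
    using path_fun_append[of E "as @ a # bs" a cs] path_fun_append[of E as a "bs @ [a]"]
    by (simp add: comp_assoc)
  have "decreasing_m (path_fun E (a # bs @ [a]))"
    by (rule path_fun_decreasing[OF good]) (use walk in auto)
  moreover have "set (butlast (a # cs)) \<subseteq> X"
    using walk by (auto dest: in_set_butlastD)
  ultimately have "mle (path_fun E (a # cs) (path_fun E (a # bs @ [a]) t)) (path_fun E (a # cs) t)" for t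
    using path_fun_mono[OF good] by (simp add: decreasing_m_def)
  then show ?thesis
    unfolding split path_fun_append[of E as a cs] by simp
qed

lemma simple_walk_above_walk:
  assumes good: "good_edges X E" and "ws \<noteq> []" "set ws \<subseteq> X"
  obtains ys where "ys \<in> simple_walks X (hd ws) (last ws)"
    and "\<And>m. mle (path_fun E ws m) (path_fun E ys m)"
  using assms(2,3)
proof (induction "length ws" arbitrary: ws thesis rule: less_induct)
  case less
  show ?case
  proof (cases "distinct ws")
    case True
    then show ?thesis
      using less.prems by (intro less.prems(1)[of ws]) (auto simp: simple_walks_def mle_refl)
  next
    case False
    then obtain as a bs cs where ws: "ws = as @ [a] @ bs @ [a] @ cs"
      using not_distinct_decomp by blast
    define ws' where "ws' = as @ a # cs"
    have ws': "length ws' < length ws" "ws' \<noteq> []" "set ws' \<subseteq> X"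
        "hd ws' = hd ws" "last ws' = last ws"
      using less.prems ws by (auto simp: ws'_def hd_append)
    have below: "mle (path_fun E ws m) (path_fun E ws' m)" for m
      using path_fun_remove_cycle[OF good] less.prems ws by (simp add: ws'_def)
    obtain ys where "ys \<in> simple_walks X (hd ws') (last ws')"
      and "\<And>m. mle (path_fun E ws' m) (path_fun E ys m)"
      using less.hyps[OF ws'(1) _ ws'(2,3)] by blast
    then show ?thesis
      using less.prems(1) ws' below mle_trans by metis
  qed
qed

lemma walk_mle_sum_SPaths:
  assumes "finite X" "good_edges X E" "ws \<noteq> []" "set ws \<subseteq> X" "z \<notin> X"
  shows "mle (path_fun E (ws @ [z]) m) (\<Sum>q\<in>SPaths X (hd ws) (last ws) z. path_fun E q m)"
proof -
  obtain ys where ys: "ys \<in> simple_walks X (hd ws) (last ws)"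
    and above: "mle (path_fun E ws m) (path_fun E ys m)"
    using simple_walk_above_walk[OF assms(2-4)] by metis
  have "last ws \<in> X" "ys \<noteq> []" "last ys = last ws"
    using assms(3,4) ys by (auto simp: simple_walks_def)
  then have "mle (path_fun E (ws @ [z]) m) (path_fun E (ys @ [z]) m)"
    using assms(2,3) above
    by (auto simp: path_fun_snoc good_edges_def intro: distributive_m_mono)
  also have "mle \<dots> (\<Sum>q\<in>SPaths X (hd ws) (last ws) z. path_fun E q m)"
    using ys assms(5) by (intro member_mle_sum finite_SPaths assms(1)) (auto simp: SPaths_eq_image)
  finally show ?thesis .
qed

section \<open>The least flow\<close>

definition path_sum :: "nat set \<Rightarrow> 'm::comm_monoid_add edges \<Rightarrow> (nat \<Rightarrow> 'm) \<Rightarrow> nat \<Rightarrow> 'm" where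
  "path_sum X E inn y = (\<Sum>x\<in>X. \<Sum>xs\<in>simple_walks X x y. path_fun E xs (inn x))"

lemma walk_mle_path_sum:
  assumes fin: "finite X" and good: "good_edges X E" and walk: "ws \<noteq> []" "set ws \<subseteq> X"
  shows "mle (path_fun E ws (inn (hd ws))) (path_sum X E inn (last ws))"
proof -
  obtain ys where ys: "ys \<in> simple_walks X (hd ws) (last ws)"
    and above: "\<And>m. mle (path_fun E ws m) (path_fun E ys m)"
    using simple_walk_above_walk[OF good walk] by metis
  have hd: "hd ws \<in> X"
    using walk by auto
  have "mle (path_fun E ws (inn (hd ws))) (path_fun E ys (inn (hd ws)))"
    by (rule above)
  also have "mle \<dots> (\<Sum>xs\<in>simple_walks X (hd ws) (last ws). path_fun E xs (inn (hd ws)))"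
    by (rule member_mle_sum[OF finite_simple_walks[OF fin] ys])
  also have "mle \<dots> (path_sum X E inn (last ws))"
    unfolding path_sum_def by (rule member_mle_sum[OF fin hd])
  finally show ?thesis .
qed

lemma walk_mle_path_sum_step:
  assumes fin: "finite X" and good: "good_edges X E" and walk: "ws \<noteq> []" "set ws \<subseteq> X"
  shows "mle (path_fun E ws (inn (hd ws)))
             (inn (last ws) + (\<Sum>w\<in>X. E w (last ws) (path_sum X E inn w)))"
proof (cases ws rule: rev_cases)
  case (snoc vs y)
  show ?thesis
  proof (cases "vs = []")
    case True
    then show ?thesis
      by (simp add: snoc mle_add1)
  next
    case False
    have vs: "set vs \<subseteq> X" "last vs \<in> X"
      using walk snoc False by auto
    have "path_fun E ws (inn (hd ws)) = E (last vs) y (path_fun E vs (inn (hd vs)))"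
      using False by (simp add: snoc path_fun_snoc)
    also have "mle \<dots> (E (last vs) y (path_sum X E inn (last vs)))"
      using walk_mle_path_sum[OF fin good False vs(1)] good vs(2)
      by (auto simp: good_edges_def intro: distributive_m_mono)
    also have "mle \<dots> (\<Sum>w\<in>X. E w y (path_sum X E inn w))"
      by (rule member_mle_sum[OF fin vs(2)])
    also have "mle \<dots> (inn y + (\<Sum>w\<in>X. E w y (path_sum X E inn w)))"
      by (rule mle_add2)
    finally show ?thesis
      by (simp add: snoc)
  qed
qed (use walk in simp)

lemma walk_mle_solution:
  assumes fin: "finite X" and good: "good_edges X E"
    and sol: "\<And>y. y \<in> X \<Longrightarrow> g y = inn y + (\<Sum>w\<in>X. E w y (g w))"
  shows "ws \<noteq> [] \<Longrightarrow> set ws \<subseteq> X \<Longrightarrow> mle (path_fun E ws (inn (hd ws))) (g (last ws))"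
proof (induction ws rule: rev_induct)
  case (snoc a ws)
  then have a: "a \<in> X"
    by simp
  show ?case
  proof (cases "ws = []")
    case True
    have "mle (inn a) (g a)"
      by (subst sol[OF a]) (rule mle_add1)
    then show ?thesis
      using True by simp
  next
    case False
    then have last: "last ws \<in> X"
      using snoc.prems by auto
    have "path_fun E (ws @ [a]) (inn (hd (ws @ [a]))) = E (last ws) a (path_fun E ws (inn (hd ws)))"
      using False by (simp add: path_fun_snoc)
    also have "mle \<dots> (E (last ws) a (g (last ws)))"
      using snoc False good last by (auto simp: good_edges_def intro: distributive_m_mono)
    also have "mle \<dots> (\<Sum>w\<in>X. E w a (g w))"
      by (rule member_mle_sum[OF fin last])
    also have "mle \<dots> (g a)"
      by (subst sol[OF a]) (rule mle_add2)
    finally show ?thesis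
      by simp
  qed
qed simp

lemma sum_SPaths_eq:
  assumes good: "good_edges X E" and "y \<in> X" "z \<notin> X"
  shows "(\<Sum>p\<in>SPaths X x y z. path_fun E p m) = E y z (\<Sum>xs\<in>simple_walks X x y. path_fun E xs m)"
proof -
  have distrib: "distributive_m (E y z)"
    using good assms(2) by (simp add: good_edges_def)
  have inj: "inj_on (\<lambda>xs. xs @ [z]) (simple_walks X x y)"
    by (auto simp: inj_on_def)
  have "(\<Sum>p\<in>SPaths X x y z. path_fun E p m) = (\<Sum>xs\<in>simple_walks X x y. path_fun E (xs @ [z]) m)"
    by (simp add: SPaths_eq_image[OF assms(3)] sum.reindex[OF inj])
  also have "\<dots> = (\<Sum>xs\<in>simple_walks X x y. E y z (path_fun E xs m))"
    by (rule sum.cong) (auto simp: simple_walks_def path_fun_snoc)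
  also have "\<dots> = E y z (\<Sum>xs\<in>simple_walks X x y. path_fun E xs m)"
    by (simp add: distributive_m_sum[OF distrib])
  finally show ?thesis .
qed

context idempotent_monoid
begin

lemma path_sum_step_mle:
  assumes fin: "finite X" and good: "good_edges X (E :: 'm edges)" and "y \<in> X" "w \<in> X"
  shows "mle (E w y (path_sum X E inn w)) (path_sum X E inn y)"
proof -
  have distrib: "distributive_m (E w y)"
    using good assms(4) by (simp add: good_edges_def)
  have "E w y (path_sum X E inn w) = (\<Sum>x\<in>X. \<Sum>xs\<in>simple_walks X x w. E w y (path_fun E xs (inn x)))"
    unfolding path_sum_def by (simp add: distributive_m_sum[OF distrib])
  also have "mle \<dots> (path_sum X E inn y)"
  proof (intro sum_mle_least)
    fix x xs
    assume "xs \<in> simple_walks X x w"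
    then have xs: "xs \<noteq> []" "set xs \<subseteq> X" "hd xs = x" "last xs = w"
      by (auto simp: simple_walks_def)
    then have "E w y (path_fun E xs (inn x)) = path_fun E (xs @ [y]) (inn (hd (xs @ [y])))"
      by (simp add: path_fun_snoc)
    also have "mle \<dots> (path_sum X E inn (last (xs @ [y])))"
      using xs \<open>y \<in> X\<close> by (intro walk_mle_path_sum[OF fin good]) auto
    finally show "mle (E w y (path_fun E xs (inn x))) (path_sum X E inn y)"
      by simp
  qed
  finally show ?thesis .
qed

lemma path_sum_fixpoint:
  assumes fin: "finite X" and good: "good_edges X (E :: 'm edges)" and y: "y \<in> X"
  shows "path_sum X E inn y = inn y + (\<Sum>w\<in>X. E w y (path_sum X E inn w))"
proof (rule mle_antisym)
  show "mle (inn y + (\<Sum>w\<in>X. E w y (path_sum X E inn w))) (path_sum X E inn y)"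
  proof (rule mle_add_least)
    show "mle (inn y) (path_sum X E inn y)"
      using walk_mle_path_sum[OF fin good, of "[y]"] y by simp
    show "mle (\<Sum>w\<in>X. E w y (path_sum X E inn w)) (path_sum X E inn y)"
      using path_sum_step_mle[OF fin good y] by (rule sum_mle_least)
  qed
next
  show "mle (path_sum X E inn y) (inn y + (\<Sum>w\<in>X. E w y (path_sum X E inn w)))"
    unfolding path_sum_def[of X E inn y]
  proof (intro sum_mle_least)
    fix x xs
    assume "xs \<in> simple_walks X x y"
    then show "mle (path_fun E xs (inn x)) (inn y + (\<Sum>w\<in>X. E w y (path_sum X E inn w)))"
      using walk_mle_path_sum_step[OF fin good, of xs inn] by (auto simp: simple_walks_def)
  qed
qed

lemma path_sum_least:
  assumes fin: "finite X" and good: "good_edges X (E :: 'm edges)"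
    and sol: "\<And>y. y \<in> X \<Longrightarrow> g y = inn y + (\<Sum>w\<in>X. E w y (g w))" and y: "y \<in> X"
  shows "mle (path_sum X E inn y) (g y)"
  unfolding path_sum_def
proof (intro sum_mle_least)
  fix x xs
  assume "xs \<in> simple_walks X x y"
  then show "mle (path_fun E xs (inn x)) (g y)"
    using walk_mle_solution[OF fin good sol, of xs] by (auto simp: simple_walks_def)
qed

lemma is_flow_sol_path_sum:
  assumes fin: "finite X" and good: "good_edges X (E :: 'm edges)"
  shows "is_flow_sol X E ifl (\<lambda>y. if y \<in> X then path_sum X E (inflow_at X ifl) y else 0)"
  unfolding is_flow_sol_def
  using path_sum_fixpoint[OF fin good] by (simp cong: sum.cong)

lemma path_sum_mle_flow_sol:
  assumes fin: "finite X" and good: "good_edges X (E :: 'm edges)"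
    and g: "is_flow_sol X E ifl g" and y: "y \<in> X"
  shows "mle (path_sum X E (inflow_at X ifl) y) (g y)"
proof (rule path_sum_least[OF fin good _ y])
  show "g w = inflow_at X ifl w + (\<Sum>v\<in>X. E v w (g v))" if "w \<in> X" for w
    using g that unfolding is_flow_sol_def by blast
qed

lemma flow_eq_path_sum:
  assumes fin: "finite X" and good: "good_edges X (E :: 'm edges)"
  shows "flow X E ifl = (\<lambda>y. if y \<in> X then path_sum X E (inflow_at X ifl) y else 0)"
    (is "_ = ?S")
  unfolding flow_def
proof (rule the_equality)
  fix fl
  assume fl: "is_flow_sol X E ifl fl \<and> (\<forall>g. is_flow_sol X E ifl g \<longrightarrow> (\<forall>x\<in>X. mle (fl x) (g x)))
    \<and> (\<forall>x. x \<notin> X \<longrightarrow> fl x = 0)"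
  show "fl = ?S"
  proof
    fix x
    show "fl x = ?S x"
    proof (cases "x \<in> X")
      case True
      have "mle (fl x) (?S x)"
        using fl is_flow_sol_path_sum[OF fin good] True by blast
      moreover have "mle (?S x) (fl x)"
        using path_sum_mle_flow_sol[OF fin good _ True] fl True by simp
      ultimately show ?thesis
        by (rule mle_antisym)
    qed (use fl in simp)
  qed
qed (simp add: is_flow_sol_path_sum[OF fin good] path_sum_mle_flow_sol[OF fin good])

lemma tf_eq_sum_SPaths:
  assumes fin: "finite X" and good: "good_edges X (E :: 'm edges)" and "y \<in> X" "z \<notin> X"
  shows "tf X E ifl y z = (\<Sum>x\<in>X. \<Sum>p\<in>SPaths X x y z. path_fun E p (inflow_at X ifl x))"
proof -
  have distrib: "distributive_m (E y z)"
    using good assms(3) by (simp add: good_edges_def)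
  have "tf X E ifl y z = E y z (path_sum X E (inflow_at X ifl) y)"
    using assms by (simp add: tf_def flow_eq_path_sum)
  also have "\<dots> = (\<Sum>x\<in>X. E y z (\<Sum>xs\<in>simple_walks X x y. path_fun E xs (inflow_at X ifl x)))"
    by (simp add: path_sum_def distributive_m_sum[OF distrib])
  also have "\<dots> = (\<Sum>x\<in>X. \<Sum>p\<in>SPaths X x y z. path_fun E p (inflow_at X ifl x))"
    using sum_SPaths_eq[OF good assms(3,4)] by simp
  finally show ?thesis .
qed

end

section \<open>Simple path replacement\<close>

lemma set_butlast_SPaths: "p \<in> SPaths X x y z \<Longrightarrow> set (butlast p) \<subseteq> X"
  by (auto simp: SPaths_def)

lemma prefix_SPath_mle_sum_SPaths:
  assumes fin: "finite X" and good: "good_edges X E" and as: "set as \<subseteq> X"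
    and q: "q \<in> SPaths X a y z"
  shows "mle (path_fun E q (path_fun E (as @ [a]) m))
             (\<Sum>q'\<in>SPaths X (hd (as @ [a])) y z. path_fun E q' m)"
proof -
  obtain ws where q_eq: "q = ws @ [z]" and "ws \<in> simple_walks X a y" and z: "z \<notin> X"
    using q by (rule SPaths_memE)
  then have ws: "ws \<noteq> []" "set ws \<subseteq> X" "hd ws = a" "last ws = y"
    by (auto simp: simple_walks_def)
  then have "ws = a # tl ws"
    by (metis list.collapse)
  then have "path_fun E q (path_fun E (as @ [a]) m) = path_fun E ((as @ ws) @ [z]) m"
    using path_fun_append[of E as a "tl ws @ [z]"] q_eq by (metis append_Cons append_assoc comp_apply)
  also have "mle \<dots> (\<Sum>q'\<in>SPaths X (hd (as @ ws)) (last (as @ ws)) z. path_fun E q' m)"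
    using ws as z by (intro walk_mle_sum_SPaths[OF fin good]) auto
  finally show ?thesis
    using ws by (cases as) simp_all
qed

definition point_inflow :: "nat \<Rightarrow> nat \<Rightarrow> 'm::zero \<Rightarrow> 'm inflow" where
  "point_inflow n x m = (\<lambda>a b. if a = n \<and> b = x then m else 0)"

context idempotent_monoid
begin

lemma Lub_m_eq: "is_lub_m K l \<Longrightarrow> Lub_m K = (l::'m)"
  unfolding Lub_m_def by (rule the_equality) (auto simp: is_lub_m_def intro: mle_antisym)

lemma infsum_m_single:
  assumes a0: "a0 \<in> A" and zero: "\<And>a. a \<in> A \<Longrightarrow> a \<noteq> a0 \<Longrightarrow> f a = 0"
  shows "infsum_m f A = (f a0 :: 'm)"
  unfolding infsum_m_def
proof (rule Lub_m_eq)
  have "mle (sum f F) (f a0)" if "F \<subseteq> A" for F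
    using that zero by (intro sum_mle_least) (metis mle_refl mle_zero subsetD)
  moreover have "f a0 = sum f {a0}"
    by simp
  ultimately show "is_lub_m {sum f F |F. finite F \<and> F \<subseteq> A} (f a0)"
    unfolding is_lub_m_def using a0 by blast
qed

lemma inflow_at_point_inflow:
  "n \<notin> X \<Longrightarrow> inflow_at X (point_inflow n x m) b = (if b = x then m else (0::'m))"
  unfolding inflow_at_def
  by (subst infsum_m_single[of n]) (auto simp: point_inflow_def)

lemma tf_point_inflow:
  assumes fin: "finite X" and good: "good_edges X (E :: 'm edges)"
    and "x \<in> X" "y \<in> X" "z \<notin> X" "n \<notin> X"
  shows "tf X E (point_inflow n x m) y z = (\<Sum>p\<in>SPaths X x y z. path_fun E p m)"
proof -
  have "tf X E (point_inflow n x m) y z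
      = (\<Sum>x'\<in>X. if x' = x then (\<Sum>p\<in>SPaths X x y z. path_fun E p m) else 0)"
    unfolding tf_eq_sum_SPaths[OF fin good assms(4,5)]
  proof (rule sum.cong[OF refl])
    fix x'
    show "(\<Sum>p\<in>SPaths X x' y z. path_fun E p (inflow_at X (point_inflow n x m) x'))
        = (if x' = x then \<Sum>p\<in>SPaths X x y z. path_fun E p m else 0)"
      using path_fun_zero[OF good set_butlast_SPaths]
      by (simp add: inflow_at_point_inflow[OF assms(6)])
  qed
  also have "\<dots> = (\<Sum>p\<in>SPaths X x y z. path_fun E p m)"
    using fin assms(3) by simp
  finally show ?thesis .
qed

lemma SPath_mle_sum_SPaths_of_spath_repl:
  assumes fin: "finite X" and good2: "good_edges X (E2 :: 'm edges)"
    and repl: "spath_repl X E1 E2" and p_mem: "p \<in> SPaths X x y z"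
  shows "mle (path_fun E1 p m) (\<Sum>q\<in>SPaths X x y z. path_fun E2 q m)"
proof -
  obtain xs where p: "p = xs @ [z]" and "xs \<in> simple_walks X x y" and z: "z \<notin> X"
    using p_mem by (rule SPaths_memE)
  then have xs: "xs \<noteq> []" "set xs \<subseteq> X" "distinct xs" "hd xs = x" "last xs = y"
    by (auto simp: simple_walks_def)
  show ?thesis
  proof (cases "\<exists>a\<in>set xs. a \<in> Out X E1 E2")
    case False
    then have "path_fun E1 p = path_fun E2 p"
      using xs(2) by (intro path_fun_cong) (auto simp: p Out_def)
    then show ?thesis
      using member_mle_sum[OF finite_SPaths[OF fin] p_mem] by simp
  next
    case True
    then obtain as a cs where xs_eq: "xs = as @ a # cs" and a: "a \<in> Out X E1 E2"
      and as_unchanged: "\<forall>b\<in>set as. b \<notin> Out X E1 E2"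
      by (rule split_list_first_propE) blast
    have as: "set as \<subseteq> X"
      using xs(2) xs_eq by auto
    have "(a # cs) @ [z] \<in> SPaths X a y z"
      using xs xs_eq z unfolding SPaths_def by (intro CollectI exI[of _ "a # cs"]) auto
    then obtain P where P: "P \<subseteq> SPaths X a y z"
      and replaced: "\<forall>m. mle (path_fun E1 ((a # cs) @ [z]) m) (\<Sum>q\<in>P. path_fun E2 q m)"
      using repl a xs z unfolding spath_repl_def by (metis last_in_set subsetD)
    have prefix: "path_fun E1 (as @ [a]) = path_fun E2 (as @ [a])"
      using as_unchanged as by (intro path_fun_cong) (auto simp: Out_def)
    have "path_fun E1 p m = path_fun E1 ((a # cs) @ [z]) (path_fun E2 (as @ [a]) m)"
      using path_fun_append[of E1 as a "cs @ [z]"] p xs_eq prefix by simp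
    also have "mle \<dots> (\<Sum>q\<in>P. path_fun E2 q (path_fun E2 (as @ [a]) m))"
      using replaced by blast
    also have "mle \<dots> (\<Sum>q\<in>SPaths X x y z. path_fun E2 q m)"
    proof (rule sum_mle_least)
      fix q
      assume "q \<in> P"
      moreover have "hd (as @ [a]) = x"
        using xs(4) xs_eq by (cases as) auto
      ultimately show "mle (path_fun E2 q (path_fun E2 (as @ [a]) m)) (\<Sum>q\<in>SPaths X x y z. path_fun E2 q m)"
        using prefix_SPath_mle_sum_SPaths[OF fin good2 as, of q] P by auto
    qed
    finally show ?thesis .
  qed
qed

lemma tf_mle_of_spath_repl:
  assumes fin: "finite X" and good1: "good_edges X (E1 :: 'm edges)" and good2: "good_edges X E2"
    and repl: "spath_repl X E1 E2"
  shows "mle (tf X E1 ifl y z) (tf X E2 ifl y z)"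
proof (cases "y \<in> X \<and> z \<notin> X")
  case True
  let ?inn = "inflow_at X ifl"
  have "mle (path_fun E1 p (?inn x)) (\<Sum>x\<in>X. \<Sum>q\<in>SPaths X x y z. path_fun E2 q (?inn x))"
    if "x \<in> X" "p \<in> SPaths X x y z" for x p
  proof -
    have "mle (path_fun E1 p (?inn x)) (\<Sum>q\<in>SPaths X x y z. path_fun E2 q (?inn x))"
      by (rule SPath_mle_sum_SPaths_of_spath_repl[OF fin good2 repl that(2)])
    also have "mle \<dots> (\<Sum>x\<in>X. \<Sum>q\<in>SPaths X x y z. path_fun E2 q (?inn x))"
      by (rule member_mle_sum[OF fin that(1)])
    finally show ?thesis .
  qed
  then show ?thesis
    using True by (simp add: tf_eq_sum_SPaths[OF fin good1] tf_eq_sum_SPaths[OF fin good2] sum_mle_least)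
next
  case False
  then show ?thesis
    by (auto simp: tf_def mle_refl)
qed

lemma spath_repl_of_tf_eq:
  assumes fin: "finite X" and good1: "good_edges X (E1 :: 'm edges)" and good2: "good_edges X E2"
    and eq: "tf X E1 = tf X E2"
  shows "spath_repl X E1 E2"
  unfolding spath_repl_def
proof (intro ballI allI impI)
  fix x y z p
  assume "x \<in> Out X E1 E2" "y \<in> X" "z \<notin> X" and p: "p \<in> SPaths X x y z"
  then have nodes: "x \<in> X" "y \<in> X" "z \<notin> X"
    by (auto simp: Out_def)
  obtain n where n: "n \<notin> X"
    using ex_new_if_finite[OF infinite_UNIV_nat fin] by blast
  have "mle (path_fun E1 p m) (\<Sum>q\<in>SPaths X x y z. path_fun E2 q m)" for m
  proof -
    have "mle (path_fun E1 p m) (\<Sum>q\<in>SPaths X x y z. path_fun E1 q m)"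
      by (rule member_mle_sum[OF finite_SPaths[OF fin] p])
    also have "\<dots> = tf X E1 (point_inflow n x m) y z"
      by (rule tf_point_inflow[OF fin good1 nodes n, symmetric])
    also have "\<dots> = tf X E2 (point_inflow n x m) y z"
      by (simp add: eq)
    also have "\<dots> = (\<Sum>q\<in>SPaths X x y z. path_fun E2 q m)"
      by (rule tf_point_inflow[OF fin good2 nodes n])
    finally show ?thesis .
  qed
  then show "\<exists>P. P \<subseteq> SPaths X x y z \<and> (\<forall>m. mle (path_fun E1 p m) (\<Sum>q\<in>P. path_fun E2 q m))"
    by blast
qed

lemma tf_eq_iff_spath_repl:
  assumes "finite X" "good_edges X (E1 :: 'm edges)" "good_edges X E2"
  shows "tf X E1 = tf X E2 \<longleftrightarrow> spath_repl X E1 E2 \<and> spath_repl X E2 E1"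
  using assms spath_repl_of_tf_eq[OF assms] spath_repl_of_tf_eq[of X E2 E1]
  by (auto intro!: ext mle_antisym tf_mle_of_spath_repl)

end

theorem theorem5:
  assumes "flow_monoid TYPE('m::comm_monoid_add)"
      and "idempotent_add TYPE('m)"
  shows "(\<forall>(X::nat set) (E::'m edges) (ifl::'m inflow) y z.
            finite X \<and> good_edges X E \<and> y \<in> X \<and> z \<notin> X \<longrightarrow>
            tf X E ifl y z =
              (\<Sum>x\<in>X. \<Sum>p\<in>SPaths X x y z. path_fun E p (inflow_at X ifl x)))
       \<and> (\<forall>(X::nat set) (E1::'m edges) (E2::'m edges).
            finite X \<and> good_edges X E1 \<and> good_edges X E2 \<longrightarrow>
            (tf X E1 = tf X E2 \<longleftrightarrow> spath_repl X E1 E2 \<and> spath_repl X E2 E1))"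
proof -
  interpret idempotent_monoid "TYPE('m)"
    by unfold_locales (rule assms(2))
  show ?thesis
    using tf_eq_sum_SPaths tf_eq_iff_spath_repl by blast
qed

end
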